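(* Let $u\in[0,1]$, $s\geq 1$, and for $x\in(0,1)$ define $$f_{u,s}(x)=\frac{s}{2}\log(1-ux^2)-\log\left(\frac{\pi}{2\mathcal{K}(x)}\right).$$ Then $f_{u,s}(x)>0$ for all $x\in(0,1)$ if and only if $2su\leq 1$.
   Context: $\mathcal{K}(r)$ denotes the complete elliptic integral of the first kind: for $0<r<1$, $\mathcal{K}(r)=\int_0^{\pi/2}(1-r^2\sin^2\theta)^{-1/2}\,d\theta=\frac{\pi}{2}\,{}_2F_1(1/2,1/2;1;r^2)$. *)

theory Defs
  imports "HOL-Analysis.Analysis"
begin

definition ellK :: "real \<Rightarrow> real" where
  "ellK r = integral {0..pi/2} (\<lambda>t. 1 / sqrt (1 - r\<^sup>2 * (sin t)\<^sup>2))"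

definition f_us :: "real \<Rightarrow> real \<Rightarrow> real \<Rightarrow> real" where
  "f_us u s x = s / 2 * ln (1 - u * x\<^sup>2) - ln (pi / (2 * ellK x))"

end

theory Submission
  imports Defs
begin

text \<open>With \<open>w = sqrt (1 - x\<^sup>2 sin\<^sup>2 t)\<close> and \<open>b = sqrt (1 - x\<^sup>2/2)\<close> we have
  \<open>w\<^sup>2 - b\<^sup>2 = x\<^sup>2 cos (2t) / 2\<close>. Expanding \<open>1/w\<close> to second order in \<open>w\<^sup>2 - b\<^sup>2\<close> around \<open>b\<close>,
  the first-order term integrates to zero over \<open>[0, \<pi>/2]\<close>, so
  \<open>2 K(x)/\<pi> = 1/b + \<Theta>(x\<^sup>4)\<close>, i.e. \<open>log (\<pi> / 2K(x)) = log (1 - x\<^sup>2/2)/2 + O(x\<^sup>4)\<close> with a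
  strictly negative remainder. If \<open>2su \<le> 1\<close>, concavity of \<open>log\<close> gives
  \<open>s log (1 - ux\<^sup>2) \<ge> log (1 - sux\<^sup>2) \<ge> log (1 - x\<^sup>2/2)\<close>, hence \<open>f\<^sub>u\<^sub>,\<^sub>s > 0\<close>. If \<open>2su > 1\<close>,
  then \<open>f\<^sub>u\<^sub>,\<^sub>s(x) \<le> -(su/2 - 1/4) x\<^sup>2 + O(x\<^sup>4)\<close> is negative for small \<open>x\<close>.\<close>

lemma ln_one_minus_mult_le:
  fixes a s :: real
  assumes "0 \<le> a" "s * a < 1" "1 \<le> s"
  shows "ln (1 - s * a) \<le> s * ln (1 - a)"
proof -
  have "(1 - 1/s) * ln 1 + (1/s) * ln (1 - s * a) \<le> ln ((1 - 1/s) *\<^sub>R 1 + (1/s) *\<^sub>R (1 - s * a))"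
    by (rule concave_onD[OF ln_concave]) (use assms in auto)
  also have "(1 - 1/s) *\<^sub>R 1 + (1/s) *\<^sub>R (1 - s * a) = 1 - a"
    using assms by (simp add: field_simps)
  finally show ?thesis
    using assms by (simp add: field_simps)
qed

lemma minus_ln_one_minus_le:
  fixes y :: real
  assumes "0 \<le> y" "y \<le> 1/2"
  shows "- ln (1 - y) \<le> y + 2 * y\<^sup>2"
proof -
  have "- ln (1 - y) = ln (1 / (1 - y))"
    using assms by (simp add: ln_div)
  also have "\<dots> \<le> 1 / (1 - y) - 1"
    using assms by (intro ln_le_minus_one) simp
  also have "\<dots> \<le> y + 2 * y\<^sup>2"
  proof -
    have "0 \<le> y\<^sup>2 * (1 - 2 * y)"
      using assms by simp
    then have "1 \<le> (1 + y + 2 * y\<^sup>2) * (1 - y)"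
      by (simp add: algebra_simps power2_eq_square)
    then show ?thesis
      using assms by (simp add: field_simps)
  qed
  finally show ?thesis .
qed

text \<open>Remainder of the second-order expansion of \<open>1/w\<close> as a function of \<open>w\<^sup>2\<close> around \<open>b\<^sup>2\<close>.\<close>

lemma inverse_expansion_remainder:
  fixes w b :: real
  assumes "w > 0" "b > 0"
  shows "1/w - (1/b - (w\<^sup>2 - b\<^sup>2) / (2 * b^3))
    = (w\<^sup>2 - b\<^sup>2)\<^sup>2 * ((w + 2 * b) / (2 * w * b^3 * (w + b)\<^sup>2))"
proof -
  have "1/w - (1/b - (w\<^sup>2 - b\<^sup>2) / (2 * b^3)) = (w - b)\<^sup>2 * (w + 2 * b) / (2 * w * b^3)"
    using assms by (simp add: field_simps power2_eq_square power3_eq_cube)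
  moreover have "(w\<^sup>2 - b\<^sup>2)\<^sup>2 = (w - b)\<^sup>2 * (w + b)\<^sup>2"
    by algebra
  then have "(w - b)\<^sup>2 = (w\<^sup>2 - b\<^sup>2)\<^sup>2 / (w + b)\<^sup>2"
    using assms by simp
  ultimately show ?thesis
    by (simp add: field_simps)
qed

lemma inverse_ge_second_order:
  fixes w b :: real
  assumes "0 < w" "w \<le> 1" "0 < b" "b \<le> 1"
  shows "1/b - (w\<^sup>2 - b\<^sup>2) / (2 * b^3) + (w\<^sup>2 - b\<^sup>2)\<^sup>2 / 8 \<le> 1/w"
proof -
  have "w * b^3 \<le> 1"
    using assms by (intro mult_le_one power_le_one) auto
  moreover have "(w + b)\<^sup>2 \<le> 2 * (w + b)"
    using assms unfolding power2_eq_square by (intro mult_right_mono) auto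
  ultimately have "w * b^3 * (w + b)\<^sup>2 \<le> 1 * (2 * (w + b))"
    using assms by (intro mult_mono) auto
  then have "2 * w * b^3 * (w + b)\<^sup>2 \<le> 8 * (w + 2 * b)"
    using assms by simp
  then have "1/8 \<le> (w + 2 * b) / (2 * w * b^3 * (w + b)\<^sup>2)"
    using assms by (simp add: field_simps)
  then have "(w\<^sup>2 - b\<^sup>2)\<^sup>2 / 8 \<le> (w\<^sup>2 - b\<^sup>2)\<^sup>2 * ((w + 2 * b) / (2 * w * b^3 * (w + b)\<^sup>2))"
    by (metis mult_left_mono times_divide_eq_right mult.right_neutral zero_le_power2)
  then show ?thesis
    using inverse_expansion_remainder[OF assms(1,3)] by linarith
qed

lemma inverse_le_second_order:
  fixes w b :: real
  assumes "1/2 \<le> w" "w \<le> 1" "1/2 \<le> b" "b \<le> 1"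
  shows "1/w \<le> 1/b - (w\<^sup>2 - b\<^sup>2) / (2 * b^3) + 24 * (w\<^sup>2 - b\<^sup>2)\<^sup>2"
proof -
  have "(1/2) * (1/2)^3 \<le> w * b^3"
    using assms by (intro mult_mono power_mono) auto
  moreover have "1 \<le> (w + b)\<^sup>2"
    using assms by (intro one_le_power) simp
  ultimately have "(1/2) * (1/2)^3 * 1 \<le> w * b^3 * (w + b)\<^sup>2"
    using assms by (intro mult_mono[of "(1/2) * (1/2)^3"]) auto
  then have "w + 2 * b \<le> 48 * (w * b^3 * (w + b)\<^sup>2)"
    using assms by (simp add: power3_eq_cube)
  then have "(w + 2 * b) / (2 * w * b^3 * (w + b)\<^sup>2) \<le> 24"
    using assms by (simp add: field_simps)
  then have "(w\<^sup>2 - b\<^sup>2)\<^sup>2 * ((w + 2 * b) / (2 * w * b^3 * (w + b)\<^sup>2)) \<le> 24 * (w\<^sup>2 - b\<^sup>2)\<^sup>2"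
    by (metis mult.commute mult_left_mono zero_le_power2)
  then show ?thesis
    using inverse_expansion_remainder[of w b] assms by linarith
qed

subsection \<open>Two-sided bounds for the complete elliptic integral\<close>

lemma has_integral_quadratic_cos_double:
  fixes A B C :: real
  shows "((\<lambda>t. A + B * cos (2 * t) + C * (cos (2 * t))\<^sup>2) has_integral (pi/2 * A + pi/4 * C)) {0..pi/2}"
proof -
  define F where "F t = A * t + B * sin (2 * t) / 2 + C * (t / 2 + sin (4 * t) / 8)" for t :: real
  have "((\<lambda>t. A + B * cos (2 * t) + C * ((1 + cos (4 * t)) / 2)) has_integral (F (pi/2) - F 0)) {0..pi/2}"
    unfolding F_def
    by (intro fundamental_theorem_of_calculus
          has_real_derivative_iff_has_vector_derivative[THEN iffD1, OF DERIV_subset])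
       (auto intro!: derivative_eq_intros)
  moreover have "(1 + cos (4 * t)) / 2 = (cos (2 * t))\<^sup>2" for t :: real
    using cos_double_cos[of "2 * t"] by simp
  moreover have "F (pi/2) - F 0 = pi/2 * A + pi/4 * C"
    using sin_zero_iff_int2[of "4 * (pi/2)"] by (simp add: F_def mult.commute)
  ultimately show ?thesis
    by simp
qed

definition ellK_integrand :: "real \<Rightarrow> real \<Rightarrow> real" where
  "ellK_integrand x t = 1 / sqrt (1 - x\<^sup>2 * (sin t)\<^sup>2)"

lemma ellK_radicand_ge:
  fixes x t :: real
  shows "1 - x\<^sup>2 \<le> 1 - x\<^sup>2 * (sin t)\<^sup>2"
  using mult_left_mono[of "(sin t)\<^sup>2" 1 "x\<^sup>2"] by (simp add: abs_square_le_1)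

lemma continuous_on_ellK_integrand:
  fixes x :: real
  assumes "x\<^sup>2 < 1"
  shows "continuous_on S (ellK_integrand x)"
proof -
  have "0 < 1 - x\<^sup>2 * (sin t)\<^sup>2" for t
    using ellK_radicand_ge[of x t] assms by linarith
  then show ?thesis
    unfolding ellK_integrand_def by (intro continuous_intros) (auto simp: less_le)
qed

lemma has_integral_ellK:
  fixes x :: real
  assumes "x\<^sup>2 < 1"
  shows "(ellK_integrand x has_integral ellK x) {0..pi/2}"
proof -
  have "(ellK_integrand x has_integral integral {0..pi/2} (ellK_integrand x)) {0..pi/2}"
    by (intro integrable_integral integrable_continuous_real continuous_on_ellK_integrand assms)
  then show ?thesis
    by (simp add: ellK_def ellK_integrand_def[abs_def])
qed

lemma ellK_integrand_sqrt_diff: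
  fixes x t :: real
  assumes "x\<^sup>2 < 1"
  defines "w \<equiv> sqrt (1 - x\<^sup>2 * (sin t)\<^sup>2)" and "b \<equiv> sqrt (1 - x\<^sup>2 / 2)"
  shows "w\<^sup>2 - b\<^sup>2 = x\<^sup>2 * cos (2 * t) / 2"
proof -
  have "w\<^sup>2 = 1 - x\<^sup>2 * (sin t)\<^sup>2"
    unfolding w_def using ellK_radicand_ge[of x t] assms by simp
  moreover have "b\<^sup>2 = 1 - x\<^sup>2 / 2"
    unfolding b_def using assms by simp
  ultimately show ?thesis
    unfolding cos_double_sin by (simp add: algebra_simps)
qed

lemma has_integral_ellK_model:
  fixes x b c :: real
  shows "((\<lambda>t. 1/b - (x\<^sup>2 * cos (2 * t) / 2) / (2 * b^3) + c * (x\<^sup>2 * cos (2 * t) / 2)\<^sup>2)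
          has_integral (pi / (2 * b) + c * x^4 * pi / 16)) {0..pi/2}"
  using has_integral_quadratic_cos_double[of "1/b" "- x\<^sup>2 / (4 * b^3)" "c * x^4 / 4"]
  by (simp add: power_mult_distrib power2_eq_square eval_nat_numeral field_simps)

lemma ellK_ge:
  fixes x :: real
  assumes "x\<^sup>2 < 1"
  shows "pi / (2 * sqrt (1 - x\<^sup>2 / 2)) + x^4 * pi / 128 \<le> ellK x"
proof -
  define b where "b = sqrt (1 - x\<^sup>2 / 2)"
  have b: "0 < b" "b \<le> 1"
    using assms by (auto simp: b_def)
  note model = has_integral_ellK_model[where c = "1/8"]
  have "pi / (2 * b) + 1/8 * x^4 * pi / 16 \<le> ellK x"
  proof (rule has_integral_le[OF model has_integral_ellK[OF assms]])
    fix t :: real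
    define w where "w = sqrt (1 - x\<^sup>2 * (sin t)\<^sup>2)"
    have "0 < w" "w \<le> 1"
      using ellK_radicand_ge[of x t] assms by (auto simp: w_def)
    then have "1/b - (w\<^sup>2 - b\<^sup>2) / (2 * b^3) + 1/8 * (w\<^sup>2 - b\<^sup>2)\<^sup>2 \<le> 1/w"
      using inverse_ge_second_order[of w b] b by simp
    then show "1/b - (x\<^sup>2 * cos (2 * t) / 2) / (2 * b^3) + 1/8 * (x\<^sup>2 * cos (2 * t) / 2)\<^sup>2
        \<le> ellK_integrand x t"
      unfolding ellK_integrand_sqrt_diff[OF assms, of t, folded w_def b_def, symmetric]
      by (simp add: ellK_integrand_def w_def)
  qed
  then show ?thesis
    by (simp add: b_def)
qed

lemma ellK_le:
  fixes x :: real
  assumes "x\<^sup>2 \<le> 1/2"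
  shows "ellK x \<le> pi / (2 * sqrt (1 - x\<^sup>2 / 2)) + 3 * x^4 * pi / 2"
proof -
  have x: "x\<^sup>2 < 1"
    using assms by simp
  define b where "b = sqrt (1 - x\<^sup>2 / 2)"
  have "(1/2)\<^sup>2 \<le> 1 - x\<^sup>2 / 2"
    using assms by (simp add: power2_eq_square)
  then have b: "1/2 \<le> b" "b \<le> 1"
    unfolding b_def by (auto dest: real_le_rsqrt)
  note model = has_integral_ellK_model[where c = 24]
  have "ellK x \<le> pi / (2 * b) + 24 * x^4 * pi / 16"
  proof (rule has_integral_le[OF has_integral_ellK[OF x] model])
    fix t :: real
    define w where "w = sqrt (1 - x\<^sup>2 * (sin t)\<^sup>2)"
    have "(1/2)\<^sup>2 \<le> 1 - x\<^sup>2 * (sin t)\<^sup>2"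
      using ellK_radicand_ge[of x t] assms by (simp add: power2_eq_square)
    then have "1/2 \<le> w" "w \<le> 1"
      unfolding w_def by (auto dest: real_le_rsqrt)
    then have "1/w \<le> 1/b - (w\<^sup>2 - b\<^sup>2) / (2 * b^3) + 24 * (w\<^sup>2 - b\<^sup>2)\<^sup>2"
      using inverse_le_second_order[of w b] b by simp
    then show "ellK_integrand x t
        \<le> 1/b - (x\<^sup>2 * cos (2 * t) / 2) / (2 * b^3) + 24 * (x\<^sup>2 * cos (2 * t) / 2)\<^sup>2"
      unfolding ellK_integrand_sqrt_diff[OF x, of t, folded w_def b_def, symmetric]
      by (simp add: ellK_integrand_def w_def)
  qed
  then show ?thesis
    by (simp add: b_def mult_ac)
qed

lemma ellK_pos:
  fixes x :: real
  assumes "x\<^sup>2 < 1"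
  shows "0 < ellK x"
proof -
  have "0 < pi / (2 * sqrt (1 - x\<^sup>2 / 2))"
    using assms by simp
  also have "\<dots> \<le> pi / (2 * sqrt (1 - x\<^sup>2 / 2)) + x^4 * pi / 128"
    by (simp add: zero_le_even_power)
  also have "\<dots> \<le> ellK x"
    by (rule ellK_ge[OF assms])
  finally show ?thesis .
qed

subsection \<open>Estimates for \<open>f\<^sub>u\<^sub>,\<^sub>s\<close>\<close>

lemma ln_ellK_ratio_gt:
  fixes x :: real
  assumes "0 < x\<^sup>2" "x\<^sup>2 < 1"
  shows "- ln (1 - x\<^sup>2 / 2) / 2 < ln (2 * ellK x / pi)"
proof -
  define b where "b = sqrt (1 - x\<^sup>2 / 2)"
  have b: "0 < b"
    using assms by (simp add: b_def)
  have "1/b < 1/b + x^4 / 64"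
    using assms by simp
  also have "\<dots> = 2 * (pi / (2 * b) + x^4 * pi / 128) / pi"
    using b by (simp add: field_simps)
  also have "\<dots> \<le> 2 * ellK x / pi"
    using ellK_ge[OF assms(2)] unfolding b_def by (intro divide_right_mono mult_left_mono) auto
  finally have "ln (1/b) < ln (2 * ellK x / pi)"
    using b by (intro ln_strict_mono) auto
  moreover have "ln (1/b) = - ln (1 - x\<^sup>2 / 2) / 2"
    using assms by (simp add: b_def ln_div ln_sqrt)
  ultimately show ?thesis
    by simp
qed

lemma ln_ellK_ratio_le:
  fixes x :: real
  assumes "x\<^sup>2 \<le> 1/2"
  shows "ln (2 * ellK x / pi) \<le> - ln (1 - x\<^sup>2 / 2) / 2 + 3 * x^4"
proof -
  define b where "b = sqrt (1 - x\<^sup>2 / 2)"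
  have b: "0 < b" "b \<le> 1"
    using assms by (auto simp: b_def)
  have K: "0 < ellK x"
    using assms by (intro ellK_pos) simp
  define y where "y = 2 * ellK x * b / pi"
  have "y \<le> 2 * (pi / (2 * b) + 3 * x^4 * pi / 2) * b / pi"
    unfolding y_def using ellK_le[OF assms, folded b_def] b
    by (intro divide_right_mono mult_right_mono mult_left_mono) auto
  also have "\<dots> = 1 + 3 * x^4 * b"
    using b by (simp add: field_simps)
  also have "\<dots> \<le> 1 + 3 * x^4"
    using b by (simp add: mult_left_le)
  finally have "y - 1 \<le> 3 * x^4"
    by simp
  moreover have "ln (2 * ellK x / pi) = ln y - ln b"
    using K b by (simp add: y_def ln_div ln_mult)
  moreover have "ln y \<le> y - 1"
    using K b by (intro ln_le_minus_one) (simp add: y_def)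
  moreover have "ln b = ln (1 - x\<^sup>2 / 2) / 2"
    using assms by (simp add: b_def ln_sqrt)
  ultimately show ?thesis
    by linarith
qed

lemma f_us_eq:
  fixes u s x :: real
  assumes "x\<^sup>2 < 1"
  shows "f_us u s x = s / 2 * ln (1 - u * x\<^sup>2) + ln (2 * ellK x / pi)"
  using ellK_pos[OF assms] by (simp add: f_us_def ln_div)

lemma f_us_pos:
  fixes u s x :: real
  assumes "0 \<le> u" "1 \<le> s" "2 * s * u \<le> 1" "0 < x" "x < 1"
  shows "0 < f_us u s x"
proof -
  have x: "0 < x\<^sup>2" "x\<^sup>2 < 1"
    using assms by (auto simp: power_less_one_iff)
  have sux: "s * (u * x\<^sup>2) \<le> x\<^sup>2 / 2"
    using mult_right_mono[OF assms(3), of "x\<^sup>2"] by simp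
  have "s * (u * x\<^sup>2) < 1"
    using sux x by linarith
  have "ln (1 - x\<^sup>2 / 2) \<le> ln (1 - s * (u * x\<^sup>2))"
    using sux x by (intro ln_mono) auto
  also have "\<dots> \<le> s * ln (1 - u * x\<^sup>2)"
    using \<open>s * (u * x\<^sup>2) < 1\<close> assms by (intro ln_one_minus_mult_le) auto
  finally show ?thesis
    using f_us_eq[OF x(2)] ln_ellK_ratio_gt[OF x] by simp
qed

lemma f_us_le:
  fixes u s x :: real
  assumes "0 \<le> u" "u \<le> 1" "0 \<le> s" "x\<^sup>2 \<le> 1/2"
  shows "f_us u s x \<le> - (s * u / 2 - 1/4) * x\<^sup>2 + 13/4 * x^4"
proof -
  have "u * x\<^sup>2 \<le> 1 * (1/2)"
    using assms by (intro mult_mono) auto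
  then have "ln (1 - u * x\<^sup>2) \<le> - (u * x\<^sup>2)"
    using ln_le_minus_one[of "1 - u * x\<^sup>2"] by simp
  then have "s / 2 * ln (1 - u * x\<^sup>2) \<le> s / 2 * - (u * x\<^sup>2)"
    using assms by (intro mult_left_mono) auto
  moreover have "- ln (1 - x\<^sup>2 / 2) \<le> x\<^sup>2 / 2 + 2 * (x\<^sup>2 / 2)\<^sup>2"
    using assms by (intro minus_ln_one_minus_le) auto
  moreover have "(x\<^sup>2)\<^sup>2 = x^4"
    by simp
  ultimately show ?thesis
    using f_us_eq[of x u s] ln_ellK_ratio_le[OF assms(4)] assms(4)
    by (simp add: algebra_simps power_divide)
qed

lemma f_us_neg_somewhere:
  fixes u s :: real
  assumes "0 \<le> u" "u \<le> 1" "0 \<le> s" "1 < 2 * s * u"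
  shows "\<exists>x. 0 < x \<and> x < 1 \<and> f_us u s x < 0"
proof -
  define d where "d = s * u / 2 - 1/4"
  define m where "m = min (1/2) (d/4)"
  have d: "0 < d"
    using assms by (simp add: d_def)
  then have m: "0 < m" "m \<le> 1/2" "m \<le> d/4"
    by (auto simp: m_def)
  define x where "x = sqrt m"
  have x: "0 < x" "x < 1" "x\<^sup>2 = m"
    using m by (auto simp: x_def)
  have "x^4 = m\<^sup>2"
    using x(3) by (metis power_mult numeral_Bit0 mult_2)
  then have "f_us u s x \<le> - d * m + 13/4 * m\<^sup>2"
    using f_us_le[of u s x] assms m x(3) by (simp add: d_def)
  also have "\<dots> < 0"
  proof -
    have "m\<^sup>2 \<le> d / 4 * m"
      using mult_right_mono[OF m(3), of m] m by (simp add: power2_eq_square)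
    moreover have "0 < d * m"
      using d m by simp
    ultimately show ?thesis
      by linarith
  qed
  finally show ?thesis
    using x by blast
qed

theorem lemma2p1:
  fixes u s :: real
  assumes "0 \<le> u" and "u \<le> 1" and "1 \<le> s"
  shows "(\<forall>x. 0 < x \<and> x < 1 \<longrightarrow> f_us u s x > 0) \<longleftrightarrow> 2 * s * u \<le> 1"
proof
  assume "\<forall>x. 0 < x \<and> x < 1 \<longrightarrow> f_us u s x > 0"
  then show "2 * s * u \<le> 1"
    using f_us_neg_somewhere[of u s] assms by force
next
  assume "2 * s * u \<le> 1"
  then show "\<forall>x. 0 < x \<and> x < 1 \<longrightarrow> f_us u s x > 0"
    using f_us_pos assms by blast
qed

end
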